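(* Let $P$ be a poset on $[n]=\{1,\dots,n\}$ whose labeling is natural (the identity permutation $e$ is a linear extension), and let $x_1,\dots,x_n$ be strictly positive reals. Let $M$ be the transition matrix of the promotion graph of $P$. Define, for $\pi\in\mathcal{L}(P)$, $$w(\pi)=\prod_{i=1}^{n}\frac{x_1+\cdots+x_i}{x_{\pi_1}+\cdots+x_{\pi_i}}.$$ Then $w$ is the stationary state of the promotion graph Markov chain normalized by $w(e)=1$, i.e. $\sum_{\pi\in\mathcal{L}(P)}M(\pi',\pi)\,w(\pi)=0$ for every $\pi'\in\mathcal{L}(P)$.
   Context: Linear extensions: $\mathcal{L}(P)=\{\pi\in S_n : i\prec j \text{ in } P \Rightarrow \pi^{-1}_i<\pi^{-1}_j\}$, written in one-line notation $\pi=\pi_1\cdots\pi_n$ (so $i\prec j$ means $i$ appears before $j$). For $1\le i<n$, the operator $\tau_i$ acts on the right on $\mathcal{L}(P)$: $\pi\tau_i$ is obtained from $\pi$ by swapping $\pi_i$ and $\pi_{i+1}$ if they are incomparable in $P$, and $\pi\tau_i=\pi$ otherwise. Operators compose as right actions: $\pi(\sigma\tau)=(\pi\sigma)\tau$. The extended promotion operators are $\partial_j=\tau_j\tau_{j+1}\cdots\tau_{n-1}$ for $1\le j\le n$ ($\partial_n$ is the identity). Promotion graph: vertex set $\mathcal{L}(P)$, and for each $\pi\in\mathcal{L}(P)$ and $j\in[n]$ a directed edge $\pi\to\pi\partial_j$ of weight $x_{\pi_j}$. Transition matrix $M$ (rows and columns indexed by $\mathcal{L}(P)$): for $\pi'\neq\pi$,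 $M(\pi',\pi)$ is the sum of the weights of edges $\pi\to\pi'$; $M(\pi,\pi)$ is minus the sum of weights of all edges $\pi\to\pi'$ with $\pi'\ne\pi$ (loops are not counted). *)

theory Defs
  imports Complex_Main
begin

definition is_poset :: "nat \<Rightarrow> (nat \<Rightarrow> nat \<Rightarrow> bool) \<Rightarrow> bool" where
  "is_poset n le \<longleftrightarrow>
     (\<forall>i\<in>{1..n}. le i i) \<and>
     (\<forall>i\<in>{1..n}. \<forall>j\<in>{1..n}. le i j \<and> le j i \<longrightarrow> i = j) \<and>
     (\<forall>i\<in>{1..n}. \<forall>j\<in>{1..n}. \<forall>k\<in>{1..n}. le i j \<and> le j k \<longrightarrow> le i k)"

definition prec :: "(nat \<Rightarrow> nat \<Rightarrow> bool) \<Rightarrow> nat \<Rightarrow> nat \<Rightarrow> bool" where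
  "prec le i j \<longleftrightarrow> le i j \<and> i \<noteq> j"

text \<open>Permutations of [n] in one-line notation: the list [pi_1,...,pi_n]
  (list index k corresponds to position k+1).\<close>
definition perm_list :: "nat \<Rightarrow> nat list \<Rightarrow> bool" where
  "perm_list n \<pi> \<longleftrightarrow> length \<pi> = n \<and> distinct \<pi> \<and> set \<pi> = {1..n}"

definition lin_ext :: "nat \<Rightarrow> (nat \<Rightarrow> nat \<Rightarrow> bool) \<Rightarrow> nat list set" where
  "lin_ext n le = {\<pi>. perm_list n \<pi> \<and>
      (\<forall>a<n. \<forall>b<n. prec le (\<pi> ! a) (\<pi> ! b) \<longrightarrow> a < b)}"

definition natural_labeling :: "nat \<Rightarrow> (nat \<Rightarrow> nat \<Rightarrow> bool) \<Rightarrow> bool" where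
  "natural_labeling n le \<longleftrightarrow> [1..<n+1] \<in> lin_ext n le"

definition incomparable :: "(nat \<Rightarrow> nat \<Rightarrow> bool) \<Rightarrow> nat \<Rightarrow> nat \<Rightarrow> bool" where
  "incomparable le a b \<longleftrightarrow> \<not> le a b \<and> \<not> le b a"

text \<open>tau_i (1 \<le> i < n): swap positions i and i+1 (1-indexed) if their entries are
  incomparable, otherwise do nothing.\<close>
definition tau :: "(nat \<Rightarrow> nat \<Rightarrow> bool) \<Rightarrow> nat \<Rightarrow> nat list \<Rightarrow> nat list" where
  "tau le i \<pi> = (if incomparable le (\<pi> ! (i - 1)) (\<pi> ! i)
                 then \<pi>[i - 1 := \<pi> ! i, i := \<pi> ! (i - 1)] else \<pi>)"

text \<open>Extended promotion partial_j = tau_j tau_{j+1} ... tau_{n-1}, acting on the right: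
  first tau_j is applied, then tau_{j+1}, ..., finally tau_{n-1}.\<close>
definition ext_prom :: "nat \<Rightarrow> (nat \<Rightarrow> nat \<Rightarrow> bool) \<Rightarrow> nat \<Rightarrow> nat list \<Rightarrow> nat list" where
  "ext_prom n le j \<pi> = fold (tau le) [j..<n] \<pi>"

text \<open>Transition matrix of the promotion graph: M \<pi>' \<pi>.  The edge \<pi> \<rightarrow> \<pi> partial_j
  (j \<in> [n]) has weight x_{\<pi>_j} = x (\<pi> ! (j-1)).\<close>
definition trans_matrix :: "nat \<Rightarrow> (nat \<Rightarrow> nat \<Rightarrow> bool) \<Rightarrow> (nat \<Rightarrow> real)
    \<Rightarrow> nat list \<Rightarrow> nat list \<Rightarrow> real" where
  "trans_matrix n le x \<pi>' \<pi> =
     (if \<pi>' \<noteq> \<pi>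
      then (\<Sum>j\<in>{j\<in>{1..n}. ext_prom n le j \<pi> = \<pi>'}. x (\<pi> ! (j - 1)))
      else - (\<Sum>j\<in>{j\<in>{1..n}. ext_prom n le j \<pi> \<noteq> \<pi>}. x (\<pi> ! (j - 1))))"

definition wt :: "nat \<Rightarrow> (nat \<Rightarrow> real) \<Rightarrow> nat list \<Rightarrow> real" where
  "wt n x \<pi> = (\<Prod>i\<in>{1..n}. (\<Sum>k\<in>{1..i}. x k) / (\<Sum>k\<in>{1..i}. x (\<pi> ! (k - 1))))"

end

theory Submission
  imports Defs "HOL-Combinatorics.Transposition"
begin

text \<open>Every extended promotion \<open>\<partial>\<^sub>j\<close> is a product of involutions of \<open>\<L>(P)\<close>, hence a
  bijection, so the inflow into \<open>\<pi>'\<close> along the \<open>\<partial>\<^sub>j\<close>-edges comes from the single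
  \<open>\<sigma>\<^sub>j = \<pi>' \<tau>\<^sub>n\<^sub>-\<^sub>1 \<cdots> \<tau>\<^sub>j\<close>.  Writing \<open>S\<^sub>i(\<sigma>)\<close> for the \<open>i\<close>-th prefix sum
  \<open>x\<^sub>\<sigma>\<^sub>1 + \<cdots> + x\<^sub>\<sigma>\<^sub>i\<close>, the weight \<open>w(\<sigma>)\<close> is \<open>\<Prod>\<^sub>i S\<^sub>i(e)/S\<^sub>i(\<sigma>)\<close> and \<open>\<tau>\<^sub>k\<close>
  changes only \<open>S\<^sub>k\<close>; hence \<open>S\<^sub>k(\<sigma>) w(\<sigma>)\<close> is invariant under \<open>\<tau>\<^sub>k\<close>.  Since
  \<open>\<sigma>\<^sub>j = \<sigma>\<^sub>j\<^sub>+\<^sub>1 \<tau>\<^sub>j\<close>, the inflow term \<open>x\<^bsub>(\<sigma>\<^sub>j)\<^sub>j\<^esub> w(\<sigma>\<^sub>j) = S\<^sub>j(\<sigma>\<^sub>j) w(\<sigma>\<^sub>j) - S\<^sub>j\<^sub>-\<^sub>1(\<sigma>\<^sub>j) w(\<sigma>\<^sub>j)\<close>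
  equals \<open>S\<^sub>j(\<sigma>\<^sub>j\<^sub>+\<^sub>1) w(\<sigma>\<^sub>j\<^sub>+\<^sub>1) - S\<^sub>j\<^sub>-\<^sub>1(\<sigma>\<^sub>j) w(\<sigma>\<^sub>j)\<close>, and the total inflow telescopes to
  \<open>S\<^sub>n(\<pi>') w(\<pi>')\<close>, which is the total outflow.\<close>

lemma fold_closed:
  assumes "\<And>i y. i \<in> set xs \<Longrightarrow> y \<in> A \<Longrightarrow> f i y \<in> A" "y \<in> A"
  shows "fold f xs y \<in> A"
  using assms by (induction xs arbitrary: y) auto

lemma fold_rev_involutions_cancel:
  assumes "\<And>i y. i \<in> set xs \<Longrightarrow> y \<in> A \<Longrightarrow> f i y \<in> A \<and> f i (f i y) = y" "y \<in> A"
  shows "fold f xs (fold f (rev xs) y) = y"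
  using assms
proof (induction xs arbitrary: y)
  case (Cons a xs)
  have "fold f (rev xs) y \<in> A"
    using Cons.prems by (intro fold_closed) auto
  then show ?case
    using Cons by simp
qed simp

lemma transpose_Suc_less_imp_less:
  assumes "transpose k (Suc k) a < transpose k (Suc k) b" "{a, b} \<noteq> {k, Suc k}"
  shows "a < b"
  using assms by (auto simp: transpose_def split: if_splits)

lemma length_tau [simp]: "length (tau le i \<pi>) = length \<pi>"
  by (simp add: tau_def)

lemma tau_tau:
  assumes "0 < i" "i < length \<pi>"
  shows "tau le i (tau le i \<pi>) = \<pi>"
  using assms by (auto simp: tau_def incomparable_def nth_list_update list_update_swap)

lemma nth_tau:
  assumes "0 < i" "i < length \<pi>" "incomparable le (\<pi> ! (i - 1)) (\<pi> ! i)" "t < length \<pi>"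
  shows "tau le i \<pi> ! t = \<pi> ! transpose (i - 1) i t"
  using assms by (auto simp: tau_def nth_list_update transpose_def)

lemma tau_in_lin_ext:
  assumes "\<pi> \<in> lin_ext n le" "0 < i" "i < n"
  shows "tau le i \<pi> \<in> lin_ext n le"
proof (cases "incomparable le (\<pi> ! (i - 1)) (\<pi> ! i)")
  case False
  then show ?thesis using assms(1) by (simp add: tau_def)
next
  case inc: True
  let ?s = "transpose (i - 1) i"
  have len: "length \<pi> = n" and ord: "\<And>a b. a < n \<Longrightarrow> b < n \<Longrightarrow> prec le (\<pi> ! a) (\<pi> ! b) \<Longrightarrow> a < b"
    using assms(1) by (auto simp: lin_ext_def perm_list_def)
  have "perm_list n (tau le i \<pi>)"
    using assms inc len by (simp add: lin_ext_def perm_list_def tau_def)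
  moreover have "a < b" if ab: "a < n" "b < n" and pr: "prec le (tau le i \<pi> ! a) (tau le i \<pi> ! b)" for a b
  proof -
    have s_lt: "?s a < n" "?s b < n"
      using ab assms by (auto simp: transpose_def)
    have "prec le (\<pi> ! ?s a) (\<pi> ! ?s b)"
      using pr nth_tau[OF assms(2) _ inc] ab len assms(3) by simp
    moreover have "{a, b} \<noteq> {i - 1, Suc (i - 1)}"
      using \<open>prec le (\<pi> ! ?s a) (\<pi> ! ?s b)\<close> inc assms(2)
      by (auto simp: doubleton_eq_iff prec_def incomparable_def)
    ultimately show "a < b"
      using ord[OF s_lt] transpose_Suc_less_imp_less[of "i - 1"] assms(2) by auto
  qed
  ultimately show ?thesis by (simp add: lin_ext_def)
qed

lemma tau_involution_on_lin_ext:
  assumes "\<pi> \<in> lin_ext n le" "0 < i" "i < n"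
  shows "tau le i \<pi> \<in> lin_ext n le \<and> tau le i (tau le i \<pi>) = \<pi>"
proof -
  have "length \<pi> = n"
    using assms(1) by (simp add: lin_ext_def perm_list_def)
  then show ?thesis
    using tau_in_lin_ext[OF assms] tau_tau[OF assms(2)] assms(3) by simp
qed

definition ext_prom_inv :: "nat \<Rightarrow> (nat \<Rightarrow> nat \<Rightarrow> bool) \<Rightarrow> nat \<Rightarrow> nat list \<Rightarrow> nat list" where
  "ext_prom_inv n le j \<pi> = fold (tau le) (rev [j..<n]) \<pi>"

lemma
  assumes "0 < j" "\<pi> \<in> lin_ext n le"
  shows ext_prom_inv_in_lin_ext: "ext_prom_inv n le j \<pi> \<in> lin_ext n le"
    and ext_prom_ext_prom_inv: "ext_prom n le j (ext_prom_inv n le j \<pi>) = \<pi>"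
    and ext_prom_inv_ext_prom: "ext_prom_inv n le j (ext_prom n le j \<pi>) = \<pi>"
proof -
  have inv: "tau le i \<sigma> \<in> lin_ext n le \<and> tau le i (tau le i \<sigma>) = \<sigma>"
    if "j \<le> i" "i < n" "\<sigma> \<in> lin_ext n le" for i \<sigma>
    using tau_involution_on_lin_ext[OF that(3) _ that(2)] that(1) assms(1) by simp
  show "ext_prom_inv n le j \<pi> \<in> lin_ext n le"
    unfolding ext_prom_inv_def
    using inv assms(2) by (auto intro!: fold_closed)
  show "ext_prom n le j (ext_prom_inv n le j \<pi>) = \<pi>"
    unfolding ext_prom_def ext_prom_inv_def
    using inv assms(2) by (intro fold_rev_involutions_cancel) auto
  have "fold (tau le) (rev [j..<n]) (fold (tau le) (rev (rev [j..<n])) \<pi>) = \<pi>"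
    using inv assms(2) by (intro fold_rev_involutions_cancel) auto
  then show "ext_prom_inv n le j (ext_prom n le j \<pi>) = \<pi>"
    by (simp add: ext_prom_def ext_prom_inv_def)
qed

lemma ext_prom_eq_iff:
  assumes "0 < j" "\<pi> \<in> lin_ext n le" "\<pi>' \<in> lin_ext n le"
  shows "ext_prom n le j \<pi> = \<pi>' \<longleftrightarrow> \<pi> = ext_prom_inv n le j \<pi>'"
  using ext_prom_ext_prom_inv[OF assms(1,3)] ext_prom_inv_ext_prom[OF assms(1,2)] by auto

lemma ext_prom_inv_self: "ext_prom_inv n le n \<pi> = \<pi>"
  by (simp add: ext_prom_inv_def)

lemma ext_prom_inv_step:
  "j < n \<Longrightarrow> ext_prom_inv n le j \<pi> = tau le j (ext_prom_inv n le (Suc j) \<pi>)"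
  by (simp add: ext_prom_inv_def upt_conv_Cons)

definition prefix_sum :: "(nat \<Rightarrow> 'a::comm_monoid_add) \<Rightarrow> nat list \<Rightarrow> nat \<Rightarrow> 'a" where
  "prefix_sum x \<sigma> i = (\<Sum>t<i. x (\<sigma> ! t))"

lemma prefix_sum_0 [simp]: "prefix_sum x \<sigma> 0 = 0"
  by (simp add: prefix_sum_def)

lemma prefix_sum_Suc: "prefix_sum x \<sigma> (Suc i) = prefix_sum x \<sigma> i + x (\<sigma> ! i)"
  by (simp add: prefix_sum_def)

lemma sum_nth_atLeastAtMost_eq_prefix_sum: "(\<Sum>k\<in>{1..i}. x (\<sigma> ! (k - 1))) = prefix_sum x \<sigma> i"
  by (induction i) (simp_all add: atLeastAtMostSuc_conv prefix_sum_Suc add.commute)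

lemma prefix_sum_upt: "i \<le> n \<Longrightarrow> prefix_sum x [1..<n+1] i = (\<Sum>k\<in>{1..i}. x k)"
  by (simp add: sum_nth_atLeastAtMost_eq_prefix_sum[symmetric] nth_upt del: upt_Suc)

lemma prefix_sum_tau:
  assumes "0 < k" "k < length \<sigma>" "i \<noteq> k" "i \<le> length \<sigma>"
  shows "prefix_sum x (tau le k \<sigma>) i = prefix_sum x \<sigma> i"
proof (cases "incomparable le (\<sigma> ! (k - 1)) (\<sigma> ! k)")
  case False
  then show ?thesis by (simp add: tau_def)
next
  case True
  let ?s = "transpose (k - 1) k"
  have "prefix_sum x (tau le k \<sigma>) i = (\<Sum>t<i. x (\<sigma> ! ?s t))"
    unfolding prefix_sum_def using assms nth_tau[OF assms(1,2) True] by (intro sum.cong) auto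
  also have "\<dots> = (\<Sum>t \<in> ?s ` {..<i}. x (\<sigma> ! t))"
    by (simp add: sum.reindex)
  also have "?s ` {..<i} = {..<i}"
    using assms(1,3) by (intro transpose_image_eq) auto
  finally show ?thesis by (simp add: prefix_sum_def)
qed

lemma prefix_sum_pos:
  fixes x :: "nat \<Rightarrow> real"
  assumes "\<sigma> \<in> lin_ext n le" "0 < i" "i \<le> n" "\<And>i. i \<in> {1..n} \<Longrightarrow> x i > 0"
  shows "prefix_sum x \<sigma> i > 0"
  unfolding prefix_sum_def
proof (rule sum_pos)
  fix t assume "t \<in> {..<i}"
  then have "\<sigma> ! t \<in> set \<sigma>"
    using assms(1,3) by (auto simp: lin_ext_def perm_list_def)
  then show "0 < x (\<sigma> ! t)"
    using assms(1,4) by (auto simp: lin_ext_def perm_list_def)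
qed (use assms(2) in auto)

lemma wt_eq_prod_prefix_sum:
  "wt n x \<sigma> = (\<Prod>i\<in>{1..n}. prefix_sum x [1..<n+1] i / prefix_sum x \<sigma> i)"
  unfolding wt_def sum_nth_atLeastAtMost_eq_prefix_sum
  by (intro prod.cong refl) (metis atLeastAtMost_iff prefix_sum_upt)

lemma prefix_sum_mult_wt_tau:
  fixes x :: "nat \<Rightarrow> real"
  assumes "\<sigma> \<in> lin_ext n le" "0 < k" "k < n" "\<And>i. i \<in> {1..n} \<Longrightarrow> x i > 0"
  shows "prefix_sum x (tau le k \<sigma>) k * wt n x (tau le k \<sigma>) = prefix_sum x \<sigma> k * wt n x \<sigma>"
proof -
  let ?E = "prefix_sum x [1..<n+1]"
  have k: "k \<in> {1..n}" using assms(2,3) by simp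
  have split: "prefix_sum x \<rho> k * wt n x \<rho> = ?E k * (\<Prod>i\<in>{1..n}-{k}. ?E i / prefix_sum x \<rho> i)"
    if "\<rho> \<in> lin_ext n le" for \<rho>
  proof -
    have "wt n x \<rho> = ?E k / prefix_sum x \<rho> k * (\<Prod>i\<in>{1..n}-{k}. ?E i / prefix_sum x \<rho> i)"
      unfolding wt_eq_prod_prefix_sum by (rule prod.remove[OF _ k]) simp
    moreover have "prefix_sum x \<rho> k > 0"
      using prefix_sum_pos[of \<rho> n le k x] that assms(2-4) by simp
    ultimately show ?thesis by simp
  qed
  have len: "length \<sigma> = n"
    using assms(1) by (simp add: lin_ext_def perm_list_def)
  have "(\<Prod>i\<in>{1..n}-{k}. ?E i / prefix_sum x (tau le k \<sigma>) i) = (\<Prod>i\<in>{1..n}-{k}. ?E i / prefix_sum x \<sigma> i)"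
    using assms(2,3) len by (intro prod.cong refl) (simp add: prefix_sum_tau)
  then show ?thesis
    using split[OF tau_in_lin_ext[OF assms(1-3)]] split[OF assms(1)] by simp
qed

lemma sum_ext_prom_inv_telescope:
  fixes x :: "nat \<Rightarrow> real"
  assumes "\<pi> \<in> lin_ext n le" "\<And>i. i \<in> {1..n} \<Longrightarrow> x i > 0" "0 < k" "k \<le> n"
  defines "\<sigma> \<equiv> \<lambda>j. ext_prom_inv n le j \<pi>"
  shows "(\<Sum>j\<in>{k..n}. x (\<sigma> j ! (j - 1)) * wt n x (\<sigma> j))
    = prefix_sum x \<pi> n * wt n x \<pi> - prefix_sum x (\<sigma> k) (k - 1) * wt n x (\<sigma> k)"
  using assms(4,3)
proof (induction k rule: inc_induct)
  case base
  then obtain m where "n = Suc m" by (cases n) auto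
  then show ?case by (simp add: \<sigma>_def ext_prom_inv_self prefix_sum_Suc algebra_simps)
next
  case (step k)
  then obtain m where m: "k = Suc m" by (cases k) auto
  have "\<sigma> k = tau le k (\<sigma> (Suc k))"
    using step(2) by (simp add: \<sigma>_def ext_prom_inv_step)
  then have "prefix_sum x (\<sigma> k) k * wt n x (\<sigma> k) = prefix_sum x (\<sigma> (Suc k)) k * wt n x (\<sigma> (Suc k))"
    using prefix_sum_mult_wt_tau[OF ext_prom_inv_in_lin_ext[OF _ assms(1)] step(4) step(2) assms(2)]
    by (simp add: \<sigma>_def)
  moreover have "{k..n} = insert k {Suc k..n}"
    using step(2) by auto
  ultimately show ?case
    using step(3) m by (simp add: prefix_sum_Suc algebra_simps)
qed

lemma wt_upt:
  fixes x :: "nat \<Rightarrow> real"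
  assumes "\<And>i. i \<in> {1..n} \<Longrightarrow> x i > 0"
  shows "wt n x [1..<n+1] = 1"
  unfolding wt_def
proof (intro prod.neutral ballI)
  fix i assume i: "i \<in> {1..n}"
  have "(\<Sum>k\<in>{1..i}. x k) > 0"
    using i assms by (intro sum_pos) auto
  then show "(\<Sum>k\<in>{1..i}. x k) / (\<Sum>k\<in>{1..i}. x ([1..<n+1] ! (k - 1))) = 1"
    using i by (simp add: sum_nth_atLeastAtMost_eq_prefix_sum prefix_sum_upt del: upt_Suc)
qed

lemma finite_lin_ext: "finite (lin_ext n le)"
proof (rule finite_subset)
  show "lin_ext n le \<subseteq> {xs. set xs \<subseteq> {1..n} \<and> length xs = n}"
    by (auto simp: lin_ext_def perm_list_def)
qed (simp add: finite_lists_length_eq)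

lemma trans_matrix_eq:
  "trans_matrix n le x \<pi>' \<pi> =
     (\<Sum>j\<in>{1..n}. if ext_prom n le j \<pi> = \<pi>' then x (\<pi> ! (j - 1)) else 0)
     - (if \<pi> = \<pi>' then \<Sum>j\<in>{1..n}. x (\<pi> ! (j - 1)) else 0)"
proof (cases "\<pi> = \<pi>'")
  case True
  have "(\<Sum>j\<in>{1..n}. x (\<pi>' ! (j - 1))) =
      (\<Sum>j\<in>{1..n}. if ext_prom n le j \<pi>' = \<pi>' then x (\<pi>' ! (j - 1)) else 0)
      + (\<Sum>j\<in>{1..n}. if ext_prom n le j \<pi>' \<noteq> \<pi>' then x (\<pi>' ! (j - 1)) else 0)"
    by (subst sum.distrib[symmetric]) (intro sum.cong refl, simp)
  then show ?thesis
    unfolding True trans_matrix_def sum.inter_filter[OF finite_atLeastAtMost] by simp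
next
  case False
  then show ?thesis
    unfolding trans_matrix_def sum.inter_filter[OF finite_atLeastAtMost] by simp
qed

lemma trans_matrix_row_sum:
  fixes w :: "nat list \<Rightarrow> real"
  assumes "\<pi>' \<in> lin_ext n le"
  defines "\<sigma> \<equiv> \<lambda>j. ext_prom_inv n le j \<pi>'"
  shows "(\<Sum>\<pi>\<in>lin_ext n le. trans_matrix n le x \<pi>' \<pi> * w \<pi>)
    = (\<Sum>j\<in>{1..n}. x (\<sigma> j ! (j - 1)) * w (\<sigma> j)) - (\<Sum>j\<in>{1..n}. x (\<pi>' ! (j - 1))) * w \<pi>'"
proof -
  let ?L = "lin_ext n le"
  let ?inflow = "\<lambda>j \<pi>. if ext_prom n le j \<pi> = \<pi>' then x (\<pi> ! (j - 1)) * w \<pi> else 0"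
  have inflow: "(\<Sum>\<pi>\<in>?L. ?inflow j \<pi>) = x (\<sigma> j ! (j - 1)) * w (\<sigma> j)" if "j \<in> {1..n}" for j
  proof -
    have "(\<Sum>\<pi>\<in>?L. ?inflow j \<pi>) = (\<Sum>\<pi>\<in>?L. if \<pi> = \<sigma> j then x (\<pi> ! (j - 1)) * w \<pi> else 0)"
      using that assms(1) by (intro sum.cong refl) (simp add: ext_prom_eq_iff \<sigma>_def)
    then show ?thesis
      using that ext_prom_inv_in_lin_ext[OF _ assms(1)] finite_lin_ext
      by (simp add: sum.delta' \<sigma>_def)
  qed
  have "(\<Sum>\<pi>\<in>?L. trans_matrix n le x \<pi>' \<pi> * w \<pi>)
      = (\<Sum>\<pi>\<in>?L. (\<Sum>j\<in>{1..n}. ?inflow j \<pi>) - (if \<pi> = \<pi>' then (\<Sum>j\<in>{1..n}. x (\<pi> ! (j - 1))) * w \<pi> else 0))"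
    by (intro sum.cong refl)
      (auto simp: trans_matrix_eq left_diff_distrib sum_distrib_right intro!: sum.cong)
  also have "\<dots> = (\<Sum>\<pi>\<in>?L. \<Sum>j\<in>{1..n}. ?inflow j \<pi>) - (\<Sum>j\<in>{1..n}. x (\<pi>' ! (j - 1))) * w \<pi>'"
    using assms(1) finite_lin_ext by (simp add: sum_subtractf sum.delta')
  also have "(\<Sum>\<pi>\<in>?L. \<Sum>j\<in>{1..n}. ?inflow j \<pi>) = (\<Sum>j\<in>{1..n}. \<Sum>\<pi>\<in>?L. ?inflow j \<pi>)"
    by (rule sum.swap)
  finally show ?thesis
    by (simp add: inflow)
qed

lemma wt_stationary:
  fixes x :: "nat \<Rightarrow> real"
  assumes "\<pi>' \<in> lin_ext n le" "\<And>i. i \<in> {1..n} \<Longrightarrow> x i > 0"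
  shows "(\<Sum>\<pi>\<in>lin_ext n le. trans_matrix n le x \<pi>' \<pi> * wt n x \<pi>) = 0"
proof (cases "n = 0")
  case True
  then show ?thesis
    unfolding trans_matrix_row_sum[OF assms(1)] by simp
next
  case False
  have "(\<Sum>j\<in>{1..n}. x (ext_prom_inv n le j \<pi>' ! (j - 1)) * wt n x (ext_prom_inv n le j \<pi>'))
      = prefix_sum x \<pi>' n * wt n x \<pi>'"
    using sum_ext_prom_inv_telescope[OF assms, where k = 1] False by simp
  then show ?thesis
    unfolding trans_matrix_row_sum[OF assms(1)] sum_nth_atLeastAtMost_eq_prefix_sum by simp
qed

theorem theorem4p5:
  fixes n :: nat and le :: "nat \<Rightarrow> nat \<Rightarrow> bool" and x :: "nat \<Rightarrow> real"
  assumes "is_poset n le"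
    and "natural_labeling n le"
    and "\<And>i. i \<in> {1..n} \<Longrightarrow> x i > 0"
  shows "wt n x [1..<n+1] = 1 \<and>
         (\<forall>\<pi>'\<in>lin_ext n le.
            (\<Sum>\<pi>\<in>lin_ext n le. trans_matrix n le x \<pi>' \<pi> * wt n x \<pi>) = 0)"
  using wt_upt[of n x] wt_stationary[of _ n le x] assms(3) by blast

end
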